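(* Let $n\ge 1$ and $d\in\mathbb{N}$ be integers, and define $N$ by $N(n,d)=N+1$. Let $\{r_k\}_{k\in\mathbb{N}}$ be a sequence of positive real numbers and, for each $k\in\mathbb{N}$, let $A_k=\{\mathbf{a}^k_0,\ldots,\mathbf{a}^k_N\}\subset\mathbb{R}^n$ be a set of $N+1$ distinct points. Suppose that: (1) $A_k$ is contained in the closed ball of radius $r_k$ centred at $\mathbf{a}^k_0$; (2) $\lim_{k\to\infty}\mathbf{a}^k_0=\boldsymbol{\xi}$ for some $\boldsymbol{\xi}\in\mathbb{R}^n$; (3) $\lim_{k\to\infty}r_k=0$; (4) there exists $c>0$ independent of $k$ such that $|\operatorname{Det} V(A_k)|\ge c\cdot r_k^{\,n\cdot N(n+1,d-1)}$ for all $k\in\mathbb{N}$. If $X\subset\mathbb{R}^n$ is a closed subset with $\bigcup_k A_k\subset X$, then $\tau^d_{N,\boldsymbol{\xi}}(X)=\mathcal{P}_d^*$.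
   Context: $N(n,d):=\binom{n+d}{d}$ (with $N(m,-1):=0$); it is the dimension of the space $\mathcal{P}_d$ of real polynomials in $n$ variables of degree $\le d$, and $\mathcal{P}_d^*$ is its dual. $I(n,d)$ is the set of multi-indices $\mathbf{j}=(j_1,\dots,j_n)\in\mathbb{Z}_{\ge0}^n$ with $|\mathbf{j}|=j_1+\dots+j_n\le d$, and $\mathbf{x}^{\mathbf{j}}=x_1^{j_1}\cdots x_n^{j_n}$. For a set $A=\{\mathbf{a}_0,\dots,\mathbf{a}_N\}$ of $N(n,d)$ points, with orderings of $A$ and of $I(n,d)=\{\mathbf{j}_0,\dots,\mathbf{j}_N\}$ fixed, the Vandermonde matrix is $V(A)=(\mathbf{a}_i^{\mathbf{j}_l})_{0\le i,l\le N}$; $|\operatorname{Det}V(A)|$ does not depend on the orderings. For $\mathbf{a}\in\mathbb{R}^n$ and $|\mathbf{p}|\le d$, $\delta^{(\mathbf{p})}_{\mathbf{a}}\in\mathcal{P}_d^*$ is $f\mapsto(-1)^{|\mathbf{p}|}\partial^{|\mathbf{p}|}f/\partial\mathbf{x}^{\mathbf{p}}(\mathbf{a})$, and $\delta_{\mathbf{a}}=\delta^{(\mathbf{0})}_{\mathbf{a}}$ (evaluation at $\mathbf{a}$). For $X\subset\mathbb{R}^n$, a bundle over $X$ is a subset $E\subset X\times\mathcal{P}_d^*$ whose fibres $E_{\mathbf{a}}=\{\xi:(\mathbf{a},\xi)\in E\}$ are linear subspaces. Higher order paratangent bundle $\tau^d_N(X)$ (Bierstone–Milman–Paw\l ucki):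 put $E_0=\{(\mathbf{a},\lambda\delta_{\mathbf{a}}):\mathbf{a}\in X,\lambda\in\mathbb{R}\}$. Given $E_k$, let $\Delta E_k$ be the set of $(\mathbf{a}_0,\dots,\mathbf{a}_N,\xi_0+\dots+\xi_N)\in X^{N+1}\times\mathcal{P}_d^*$ with $\mathbf{a}_i\in X$, $\xi_i\in E_{k,\mathbf{a}_i}$ and $|\mathbf{a}_i-\mathbf{a}_0|^{d-|\alpha|}\,|\xi_i((\mathbf{x}-\mathbf{a}_i)^\alpha)|\le1$ for all multi-indices $|\alpha|\le d$ and $0\le i\le N$. Let $E'_k$ be the set of $(\mathbf{a},\xi)\in X\times\mathcal{P}_d^*$ such that $(\mathbf{a},\dots,\mathbf{a},\xi)$ lies in the closure of $\Delta E_k$, and let $E_{k+1}$ be the bundle whose fibre at $\mathbf{a}$ is the linear span of $E'_{k,\mathbf{a}}$. The sequence $E_0\subset E_1\subset\cdots$ stabilizes, and $\tau^d_N(X):=E_{2\dim\mathcal{P}_d^*}$ is its stable value; $\tau^d_{N,\mathbf{a}}(X)$ denotes its fibre at $\mathbf{a}\in X$. *)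

theory Defs
  imports "HOL-Analysis.Analysis" "HOL-Combinatorics.Permutations"
begin

text \<open>Points of R^n are vectors of type real^'n, with n = CARD('n).
 Multi-indices are functions 'n => nat; |j| = sum j UNIV.
 A polynomial of degree at most d is determined by its coefficients on the monomial
 basis x^j, j in I(n,d); hence an element of the dual space P_d^* is represented by
 its values on the monomials, i.e. by a function ('n => nat) => real that vanishes
 outside I(n,d).  A polynomial with coefficient function c is sent by xi to
 sum over j in I(n,d) of c j * xi j.\<close>

definition Nd :: "nat \<Rightarrow> int \<Rightarrow> nat" where
  "Nd m d = (if d < 0 then 0 else (m + nat d) choose (nat d))"

definition mons :: "nat \<Rightarrow> ('n::finite \<Rightarrow> nat) set" where
  "mons d = {j. sum j UNIV \<le> d}"

definition NN :: "'n::finite itself \<Rightarrow> nat \<Rightarrow> nat" where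
  "NN T d = Nd CARD('n) (int d) - 1"

definition Pdual :: "nat \<Rightarrow> (('n::finite \<Rightarrow> nat) \<Rightarrow> real) set" where
  "Pdual d = {xi. \<forall>j. j \<notin> mons d \<longrightarrow> xi j = 0}"

definition monom :: "real^'n \<Rightarrow> ('n::finite \<Rightarrow> nat) \<Rightarrow> real" where
  "monom a j = (\<Prod>i\<in>UNIV. (a$i) ^ (j i))"

definition delta :: "nat \<Rightarrow> real^'n \<Rightarrow> (('n::finite \<Rightarrow> nat) \<Rightarrow> real)" where
  "delta d a = (\<lambda>j. if j \<in> mons d then monom a j else 0)"

text \<open>xi((x - a)^alpha), using the binomial expansion of (x - a)^alpha in the monomial basis\<close>
definition shift_eval :: "nat \<Rightarrow> (('n::finite \<Rightarrow> nat) \<Rightarrow> real) \<Rightarrow> real^'n \<Rightarrow> ('n \<Rightarrow> nat) \<Rightarrow> real" where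
  "shift_eval d xi a alpha =
     (\<Sum>beta\<in>mons d. (if (\<forall>i. beta i \<le> alpha i)
         then (\<Prod>i\<in>UNIV. of_nat (alpha i choose beta i) * (- (a$i)) ^ (alpha i - beta i))
         else 0) * xi beta)"

definition lspan :: "(('n \<Rightarrow> nat) \<Rightarrow> real) set \<Rightarrow> (('n \<Rightarrow> nat) \<Rightarrow> real) set" where
  "lspan S = {(\<lambda>j. \<Sum>v\<in>F. c v * v j) | F c. finite F \<and> F \<subseteq> S}"

text \<open>Bundles over X: maps from points to fibres (empty fibre off X).
 Tuples (a_0,...,a_N) are functions nat => real^'n that are 0 at indices > N;
 the closure is taken in the product topology.\<close>

definition E0 :: "(real^'n) set \<Rightarrow> nat \<Rightarrow> real^'n \<Rightarrow> (('n::finite \<Rightarrow> nat) \<Rightarrow> real) set" where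
  "E0 X d a = (if a \<in> X then {(\<lambda>j. t * delta d a j) | t. True} else {})"

definition DeltaE :: "(real^'n) set \<Rightarrow> nat \<Rightarrow> (real^'n \<Rightarrow> (('n::finite \<Rightarrow> nat) \<Rightarrow> real) set)
    \<Rightarrow> ((nat \<Rightarrow> real^'n) \<times> (('n \<Rightarrow> nat) \<Rightarrow> real)) set" where
  "DeltaE X d E = {(p, xi). (\<forall>i. NN TYPE('n) d < i \<longrightarrow> p i = 0) \<and>
      (\<exists>xis. (\<forall>i\<le>NN TYPE('n) d. p i \<in> X \<and> xis i \<in> E (p i) \<and>
               (\<forall>alpha\<in>mons d. norm (p i - p 0) ^ (d - sum alpha UNIV)
                    * \<bar>shift_eval d (xis i) (p i) alpha\<bar> \<le> 1))
        \<and> xi = (\<lambda>j. \<Sum>i\<le>NN TYPE('n) d. xis i j))}"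

definition diag :: "nat \<Rightarrow> real^'n::finite \<Rightarrow> nat \<Rightarrow> real^'n" where
  "diag d a = (\<lambda>i. if i \<le> NN TYPE('n) d then a else 0)"

definition Eprime :: "(real^'n) set \<Rightarrow> nat \<Rightarrow> (real^'n \<Rightarrow> (('n::finite \<Rightarrow> nat) \<Rightarrow> real) set)
    \<Rightarrow> real^'n \<Rightarrow> (('n \<Rightarrow> nat) \<Rightarrow> real) set" where
  "Eprime X d E a = {xi. a \<in> X \<and> (diag d a, xi) \<in> closure (DeltaE X d E)}"

definition Estep :: "(real^'n) set \<Rightarrow> nat \<Rightarrow> (real^'n \<Rightarrow> (('n::finite \<Rightarrow> nat) \<Rightarrow> real) set)
    \<Rightarrow> real^'n \<Rightarrow> (('n \<Rightarrow> nat) \<Rightarrow> real) set" where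
  "Estep X d E a = (if a \<in> X then lspan (Eprime X d E a) else {})"

definition Ek :: "(real^'n) set \<Rightarrow> nat \<Rightarrow> nat \<Rightarrow> real^'n \<Rightarrow> (('n::finite \<Rightarrow> nat) \<Rightarrow> real) set" where
  "Ek X d k = (Estep X d ^^ k) (E0 X d)"

text \<open>higher order paratangent bundle tau^d_N(X) = E_{2 dim P_d^*}\<close>
definition paratangent :: "(real^'n) set \<Rightarrow> nat \<Rightarrow> real^'n \<Rightarrow> (('n::finite \<Rightarrow> nat) \<Rightarrow> real) set" where
  "paratangent X d = Ek X d (2 * Nd CARD('n) (int d))"

definition ldet :: "nat \<Rightarrow> (nat \<Rightarrow> nat \<Rightarrow> real) \<Rightarrow> real" where
  "ldet N M = (\<Sum>p | p permutes {..N}. of_int (sign p) * (\<Prod>i\<le>N. M i (p i)))"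

text \<open>|Det V(A)| for A = {a 0, ..., a N}, with a fixed (arbitrary) enumeration of I(n,d);
 the absolute value does not depend on it.\<close>
definition abs_vdet :: "nat \<Rightarrow> (nat \<Rightarrow> real^'n::finite) \<Rightarrow> real" where
  "abs_vdet d a = (let e = (SOME e. bij_betw e {..NN TYPE('n) d} (mons d)) in
      \<bar>ldet (NN TYPE('n) d) (\<lambda>i l. monom (a i) (e l))\<bar>)"

end

theory Submission
  imports Defs "Jordan_Normal_Form.Determinant"
begin

(* Write a functional eta in P_d^* as a combination sum_i lam_i delta_{a_i} of evaluations at the
   points of A_k.  Expanding every monomial around a_0 factors the (transposed) Vandermonde matrix
   as T * D * W: T is unitriangular for the componentwise order of multi-indices and has entries
   bounded in terms of |a_0|, D = diag(r^|b|), and W is the Vandermonde matrix of the rescaled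
   points (a_i - a_0)/r, whose entries lie in [-1, 1].  Since det D = r^(n N(n+1,d-1)),
   hypothesis (4) says exactly |det W| >= c, and Cramer's rule gives |lam_i| r^d <= C with C
   independent of k.  Hence, for a fixed t > 0, the pairs (A_k, t eta) satisfy the constraints
   defining Delta E_0; they converge to ((xi, ..., xi), t eta), so t eta lies in E'_0 at xi and
   eta in E_1, which is contained in tau^d_N(X). *)

section \<open>Multi-indices\<close>

definition multi_indices :: "'a set \<Rightarrow> nat \<Rightarrow> ('a \<Rightarrow> nat) set" where
  "multi_indices I d = {b. (\<forall>x. x \<notin> I \<longrightarrow> b x = 0) \<and> sum b I \<le> d}"

lemma finite_multi_indices:
  assumes "finite I"
  shows "finite (multi_indices I d)"
proof (rule finite_subset)
  show "multi_indices I d \<subseteq> {b. \<forall>x. (x \<in> I \<longrightarrow> b x \<in> {..d}) \<and> (x \<notin> I \<longrightarrow> b x = 0)}"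
    using assms by (auto simp: multi_indices_def intro: order_trans[OF member_le_sum])
  show "finite {b. \<forall>x. (x \<in> I \<longrightarrow> b x \<in> {..d}) \<and> (x \<notin> I \<longrightarrow> b x = 0)}"
    using assms by (intro finite_set_of_finite_funs) auto
qed

lemma multi_indices_empty: "multi_indices {} d = {\<lambda>_. 0}"
  unfolding multi_indices_def by (auto simp: fun_eq_iff)

lemma bij_betw_multi_indices_insert:
  assumes "finite I" "i \<notin> I"
  shows "bij_betw (\<lambda>b. (b i, b(i := 0))) (multi_indices (insert i I) d)
           (SIGMA m:{..d}. multi_indices I (d - m))"
proof (rule bij_betwI[where g = "\<lambda>(m, b). b(i := m)"])
  show "(\<lambda>b. (b i, b(i := 0))) \<in> multi_indices (insert i I) d \<rightarrow> (SIGMA m:{..d}. multi_indices I (d - m))"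
  proof
    fix b assume b: "b \<in> multi_indices (insert i I) d"
    have "sum (b(i := 0)) I = sum b I" using assms by (intro sum.cong) auto
    then show "(b i, b(i := 0)) \<in> (SIGMA m:{..d}. multi_indices I (d - m))"
      using b assms unfolding multi_indices_def by auto
  qed
  show "(\<lambda>(m, b). b(i := m)) \<in> (SIGMA m:{..d}. multi_indices I (d - m)) \<rightarrow> multi_indices (insert i I) d"
  proof
    fix p assume "p \<in> (SIGMA m:{..d}. multi_indices I (d - m))"
    then obtain m b where p: "p = (m, b)" "m \<le> d" "b \<in> multi_indices I (d - m)" by auto
    have "sum (b(i := m)) I = sum b I" using assms by (intro sum.cong) auto
    then show "(case p of (m, b) \<Rightarrow> b(i := m)) \<in> multi_indices (insert i I) d"
      using p assms unfolding multi_indices_def by auto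
  qed
qed (use assms in \<open>auto simp: multi_indices_def fun_eq_iff\<close>)

lemma card_multi_indices:
  assumes "finite I"
  shows "card (multi_indices I d) = (card I + d) choose d"
  using assms
proof (induction I arbitrary: d rule: finite_induct)
  case empty
  then show ?case by (simp add: multi_indices_empty)
next
  case (insert i I)
  have "card (multi_indices (insert i I) d) = card (SIGMA m:{..d}. multi_indices I (d - m))"
    by (rule bij_betw_same_card[OF bij_betw_multi_indices_insert[OF insert(1,2)]])
  also have "\<dots> = (\<Sum>m\<le>d. (card I + (d - m)) choose (d - m))"
    using insert by (simp add: card_SigmaI finite_multi_indices)
  also have "\<dots> = (\<Sum>m\<le>d. (card I + m) choose m)"
    by (rule sum.reindex_bij_witness[where i = "\<lambda>m. d - m" and j = "\<lambda>m. d - m"]) auto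
  also have "\<dots> = Suc (card I + d) choose d"
    by (rule sum_choose_lower)
  finally show ?case using insert by simp
qed

lemma sum_codegree_multi_indices:
  assumes "finite I"
  shows "(\<Sum>b\<in>multi_indices I d. d - sum b I) = (\<Sum>k<d. card (multi_indices I k))"
proof -
  have "(\<Sum>b\<in>multi_indices I d. d - sum b I)
      = (\<Sum>b\<in>multi_indices I d. \<Sum>k<d. if sum b I \<le> k then 1 else 0)"
  proof (intro sum.cong refl)
    fix b
    have "{k\<in>{..<d}. sum b I \<le> k} = {sum b I..<d}" by auto
    then show "d - sum b I = (\<Sum>k<d. if sum b I \<le> k then 1 else 0)"
      by (simp add: sum.inter_filter[symmetric])
  qed
  also have "\<dots> = (\<Sum>k<d. \<Sum>b\<in>multi_indices I d. if sum b I \<le> k then 1 else 0)"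
    by (rule sum.swap)
  also have "\<dots> = (\<Sum>k<d. card (multi_indices I k))"
  proof (intro sum.cong refl)
    fix k assume "k \<in> {..<d}"
    then have "{b \<in> multi_indices I d. sum b I \<le> k} = multi_indices I k"
      unfolding multi_indices_def by auto
    then show "(\<Sum>b\<in>multi_indices I d. if sum b I \<le> k then 1 else 0) = card (multi_indices I k)"
      using finite_multi_indices[OF assms] by (simp add: sum.inter_filter[symmetric])
  qed
  finally show ?thesis .
qed

lemma sum_degree_multi_indices:
  assumes "finite I" "d > 0"
  shows "(\<Sum>b\<in>multi_indices I d. sum b I) = card I * ((card I + d) choose (d - 1))"
proof -
  let ?n = "card I"
  obtain d' where d: "d = Suc d'" using assms(2) gr0_implies_Suc by blast
  have "(\<Sum>b\<in>multi_indices I d. sum b I) + (\<Sum>b\<in>multi_indices I d. d - sum b I)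
      = (\<Sum>b\<in>multi_indices I d. d)"
    unfolding sum.distrib[symmetric] by (intro sum.cong) (auto simp: multi_indices_def)
  also have "\<dots> = d * ((?n + d) choose d)"
    using assms by (simp add: card_multi_indices)
  also have "\<dots> = Suc (?n + d') * ((?n + d') choose d')"
    using Suc_times_binomial_eq[of "?n + d'" d'] d by (simp add: mult.commute)
  also have "\<dots> = Suc ?n * ((?n + d) choose d')"
    using binomial_absorb_comp[of "?n + d" d'] d by simp
  finally have "(\<Sum>b\<in>multi_indices I d. sum b I) + ((?n + d) choose d') = Suc ?n * ((?n + d) choose d')"
    using assms d by (simp add: sum_codegree_multi_indices card_multi_indices lessThan_Suc_atMost
        sum_choose_lower)
  then show ?thesis using d by simp
qed

lemma mons_eq_multi_indices: "mons d = multi_indices (UNIV :: 'n::finite set) d"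
  unfolding mons_def multi_indices_def by auto

lemma finite_mons: "finite (mons d :: ('n::finite \<Rightarrow> nat) set)"
  by (simp add: mons_eq_multi_indices finite_multi_indices)

lemma card_mons: "card (mons d :: ('n::finite \<Rightarrow> nat) set) = Nd CARD('n) (int d)"
  by (simp add: mons_eq_multi_indices card_multi_indices Nd_def)

lemma card_mons_eq_Suc_NN: "card (mons d :: ('n::finite \<Rightarrow> nat) set) = Suc (NN TYPE('n) d)"
  by (simp add: card_mons NN_def Nd_def)

lemma sum_degree_mons:
  "(\<Sum>b\<in>(mons d :: ('n::finite \<Rightarrow> nat) set). sum b UNIV) = CARD('n) * Nd (CARD('n) + 1) (int d - 1)"
proof (cases "d = 0")
  case True
  then show ?thesis by (simp add: mons_def Nd_def)
next
  case False
  then show ?thesis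
    by (simp add: mons_eq_multi_indices sum_degree_multi_indices Nd_def nat_diff_distrib)
qed

section \<open>Regular bundles and the paratangent bundle\<close>

lemma closed_Pdual: "closed (Pdual d :: (('n::finite \<Rightarrow> nat) \<Rightarrow> real) set)"
proof -
  have "Pdual d = (\<Inter>j\<in>-mons d. {xi :: ('n \<Rightarrow> nat) \<Rightarrow> real. xi j = 0})"
    unfolding Pdual_def by auto
  moreover have "closed {xi :: ('n \<Rightarrow> nat) \<Rightarrow> real. xi j = 0}" for j
    by (rule closed_Collect_eq) (auto intro: continuous_on_product_coordinates)
  ultimately show ?thesis by auto
qed

lemma lspan_scale: "xi \<in> lspan S \<Longrightarrow> (\<lambda>j. c * xi j) \<in> lspan S"
proof -
  assume "xi \<in> lspan S"
  then obtain F cf where F: "finite F" "F \<subseteq> S" and xi: "xi = (\<lambda>j. \<Sum>v\<in>F. cf v * v j)"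
    unfolding lspan_def by auto
  have "(\<lambda>j. c * xi j) = (\<lambda>j. \<Sum>v\<in>F. (c * cf v) * v j)"
    unfolding xi by (simp add: sum_distrib_left mult.assoc)
  then show ?thesis
    using F unfolding lspan_def by (intro CollectI exI[of _ F] exI[of _ "\<lambda>v. c * cf v"]) auto
qed

lemma scale_mem_lspan: "v \<in> S \<Longrightarrow> (\<lambda>j. c * v j) \<in> lspan S"
  unfolding lspan_def by (rule CollectI, rule exI[of _ "{v}"], rule exI[of _ "\<lambda>_. c"]) auto

lemma lspan_subset_Pdual: "S \<subseteq> Pdual d \<Longrightarrow> lspan S \<subseteq> Pdual d"
  unfolding lspan_def Pdual_def by (auto intro!: sum.neutral)

lemma shift_eval_scale: "shift_eval d (\<lambda>j. c * xi j) a alpha = c * shift_eval d xi a alpha"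
  unfolding shift_eval_def by (simp add: sum_distrib_left mult.left_commute)

lemma DeltaE_subset_Pdual:
  fixes E :: "real^'n::finite \<Rightarrow> (('n \<Rightarrow> nat) \<Rightarrow> real) set"
  assumes "\<And>a. E a \<subseteq> Pdual d"
  shows "DeltaE X d E \<subseteq> UNIV \<times> Pdual d"
proof
  fix z assume "z \<in> DeltaE X d E"
  then obtain p xi xis where z: "z = (p, xi)" and xis: "\<forall>i\<le>NN TYPE('n) d. xis i \<in> E (p i)"
    and xi: "xi = (\<lambda>j. \<Sum>i\<le>NN TYPE('n) d. xis i j)"
    unfolding DeltaE_def by blast
  have "xi \<in> Pdual d"
    unfolding xi using xis assms unfolding Pdual_def by (auto intro!: sum.neutral)
  then show "z \<in> UNIV \<times> Pdual d" using z by simp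
qed

definition regular_bundle ::
  "(real^'n) set \<Rightarrow> nat \<Rightarrow> (real^'n \<Rightarrow> (('n::finite \<Rightarrow> nat) \<Rightarrow> real) set) \<Rightarrow> bool" where
  "regular_bundle X d E \<longleftrightarrow> (\<forall>a. a \<notin> X \<longrightarrow> E a = {}) \<and>
     (\<forall>a xi c. xi \<in> E a \<longrightarrow> (\<lambda>j. c * xi j) \<in> E a) \<and> (\<forall>a. E a \<subseteq> Pdual d)"

lemma regular_bundle_E0: "regular_bundle X d (E0 X d)"
proof -
  have "(\<lambda>j. c * (t * delta d a j)) = (\<lambda>j. (c * t) * delta d a j)" for c t a
    by (simp add: mult.assoc)
  then show ?thesis
    unfolding regular_bundle_def E0_def Pdual_def delta_def by auto
qed

lemma regular_bundle_Estep:
  assumes "regular_bundle X d E"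
  shows "regular_bundle X d (Estep X d E)"
proof -
  have "closure (DeltaE X d E) \<subseteq> UNIV \<times> Pdual d"
    using DeltaE_subset_Pdual[of E d X] assms unfolding regular_bundle_def
    by (intro closure_minimal) (auto intro: closed_Times closed_Pdual)
  then have "Eprime X d E a \<subseteq> Pdual d" for a
    unfolding Eprime_def by auto
  then have "lspan (Eprime X d E a) \<subseteq> Pdual d" for a
    by (rule lspan_subset_Pdual)
  then show ?thesis
    unfolding regular_bundle_def Estep_def by (auto intro: lspan_scale)
qed

lemma Ek_Suc: "Ek X d (Suc k) = Estep X d (Ek X d k)"
  unfolding Ek_def by simp

lemma regular_bundle_Ek: "regular_bundle X d (Ek X d k)"
  by (induction k) (auto simp: Ek_Suc regular_bundle_Estep regular_bundle_E0 Ek_def)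

lemma diag_mem_DeltaE:
  fixes E :: "real^'n::finite \<Rightarrow> (('n \<Rightarrow> nat) \<Rightarrow> real) set"
  assumes E: "regular_bundle X d E" and xi: "xi \<in> E a"
    and bound: "\<And>alpha. alpha \<in> mons d \<Longrightarrow> \<bar>shift_eval d xi a alpha\<bar> \<le> 1"
  shows "(diag d a, xi) \<in> DeltaE X d E"
  unfolding DeltaE_def
proof (clarify, intro conjI exI[of _ "\<lambda>i j. (if i = 0 then 1 else 0) * xi j"])
  have aX: "a \<in> X" using E xi unfolding regular_bundle_def by auto
  show "\<forall>i>NN TYPE('n) d. diag d a i = 0"
    by (simp add: diag_def)
  show "xi = (\<lambda>j. \<Sum>i\<le>NN TYPE('n) d. (if i = 0 then 1 else 0) * xi j)"
    by (simp add: sum_distrib_right[symmetric])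
  show "\<forall>i\<le>NN TYPE('n) d. diag d a i \<in> X \<and> (\<lambda>j. (if i = 0 then 1 else 0) * xi j) \<in> E (diag d a i) \<and>
      (\<forall>alpha\<in>mons d. norm (diag d a i - diag d a 0) ^ (d - sum alpha UNIV) *
         \<bar>shift_eval d (\<lambda>j. (if i = 0 then 1 else 0) * xi j) (diag d a i) alpha\<bar> \<le> 1)"
    using aX xi E bound unfolding regular_bundle_def
    by (auto simp: diag_def shift_eval_scale power_0_left)
qed

lemma regular_bundle_subset_Estep:
  assumes E: "regular_bundle X d E"
  shows "E a \<subseteq> Estep X d E a"
proof
  fix xi assume xi: "xi \<in> E a"
  then have aX: "a \<in> X" using E unfolding regular_bundle_def by auto
  define M where "M = (\<Sum>alpha\<in>mons d. \<bar>shift_eval d xi a alpha\<bar>) + 1"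
  have M: "M > 0" unfolding M_def by (auto intro: add_nonneg_pos sum_nonneg)
  have "\<bar>shift_eval d (\<lambda>j. (1 / M) * xi j) a alpha\<bar> \<le> 1" if "alpha \<in> mons d" for alpha
  proof -
    have "\<bar>shift_eval d xi a alpha\<bar> \<le> (\<Sum>alpha\<in>mons d. \<bar>shift_eval d xi a alpha\<bar>)"
      using that finite_mons by (intro member_le_sum) auto
    then have "\<bar>shift_eval d xi a alpha\<bar> \<le> M"
      unfolding M_def by simp
    then show ?thesis using M unfolding shift_eval_scale by (simp add: abs_mult field_simps)
  qed
  moreover have "(\<lambda>j. (1 / M) * xi j) \<in> E a" using E xi unfolding regular_bundle_def by blast
  ultimately have "(diag d a, (\<lambda>j. (1 / M) * xi j)) \<in> closure (DeltaE X d E)"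
    using diag_mem_DeltaE[OF E] closure_subset by blast
  then have "(\<lambda>j. (1 / M) * xi j) \<in> Eprime X d E a"
    unfolding Eprime_def using aX by simp
  then have "(\<lambda>j. M * ((1 / M) * xi j)) \<in> lspan (Eprime X d E a)"
    by (rule scale_mem_lspan)
  then show "xi \<in> Estep X d E a"
    unfolding Estep_def using aX M by simp
qed

lemma Ek_mono: "k \<le> k' \<Longrightarrow> Ek X d k a \<subseteq> Ek X d k' a"
proof (induction k' rule: dec_induct)
  case (step m)
  then show ?case
    using regular_bundle_subset_Estep[OF regular_bundle_Ek[of X d m]] by (auto simp: Ek_Suc)
qed simp

lemma paratangent_subset_Pdual: "paratangent X d a \<subseteq> Pdual d"
  using regular_bundle_Ek unfolding paratangent_def regular_bundle_def by blast

lemma mem_paratangent_if_scaled_mem_Eprime: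
  fixes eta :: "('n::finite \<Rightarrow> nat) \<Rightarrow> real"
  assumes "t \<noteq> 0" and "(\<lambda>j. t * eta j) \<in> Eprime X d (E0 X d) a"
  shows "eta \<in> paratangent X d a"
proof -
  have "(\<lambda>j. (1 / t) * (t * eta j)) \<in> Estep X d (E0 X d) a"
    using assms(2) scale_mem_lspan[OF assms(2), of "1 / t"] unfolding Estep_def Eprime_def by simp
  then have "eta \<in> Ek X d 1 a"
    using assms(1) by (simp add: Ek_def)
  moreover have "1 \<le> 2 * Nd CARD('n) (int d)"
    by (simp add: Nd_def Suc_leI)
  ultimately show ?thesis
    unfolding paratangent_def using Ek_mono by blast
qed

section \<open>Shifted monomials and weighted sums of point evaluations\<close>

text \<open>The coefficient of \<open>y\<^sup>b\<close> in \<open>(v + y)\<^sup>j\<close>.\<close>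

definition shift_coeff :: "('n \<Rightarrow> real) \<Rightarrow> ('n \<Rightarrow> nat) \<Rightarrow> ('n \<Rightarrow> nat) \<Rightarrow> real" where
  "shift_coeff v b j =
     (if \<forall>x. b x \<le> j x then \<Prod>x\<in>UNIV. of_nat (j x choose b x) * v x ^ (j x - b x) else 0)"

lemma multi_binomial:
  fixes u v :: "'n::finite \<Rightarrow> real"
  assumes j: "j \<in> mons d"
  shows "(\<Prod>x\<in>UNIV. (u x + v x) ^ j x) = (\<Sum>b\<in>mons d. shift_coeff v b j * (\<Prod>x\<in>UNIV. u x ^ b x))"
proof -
  have box: "PiE UNIV (\<lambda>x. {..j x}) = {b \<in> mons d. \<forall>x. b x \<le> j x}"
  proof -
    have "sum b UNIV \<le> d" if "\<forall>x. b x \<le> j x" for b :: "'n \<Rightarrow> nat"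
      using sum_mono[of UNIV b j] that j unfolding mons_def by auto
    then show ?thesis by (auto simp: PiE_UNIV_domain mons_def)
  qed
  have "(\<Prod>x\<in>UNIV. (u x + v x) ^ j x) =
      (\<Prod>x\<in>UNIV. \<Sum>k\<le>j x. of_nat (j x choose k) * u x ^ k * v x ^ (j x - k))"
    by (simp add: binomial_ring)
  also have "\<dots> = (\<Sum>b\<in>PiE UNIV (\<lambda>x. {..j x}).
      \<Prod>x\<in>UNIV. of_nat (j x choose b x) * u x ^ b x * v x ^ (j x - b x))"
    by (rule prod_sum_PiE) auto
  also have "\<dots> = (\<Sum>b\<in>mons d. if \<forall>x. b x \<le> j x then
      \<Prod>x\<in>UNIV. of_nat (j x choose b x) * u x ^ b x * v x ^ (j x - b x) else 0)"
    by (simp add: box sum.inter_filter[OF finite_mons])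
  also have "\<dots> = (\<Sum>b\<in>mons d. shift_coeff v b j * (\<Prod>x\<in>UNIV. u x ^ b x))"
    by (intro sum.cong) (auto simp: shift_coeff_def prod.distrib[symmetric] mult_ac)
  finally show ?thesis .
qed

lemma shift_eval_eq: "shift_eval d xi a alpha = (\<Sum>b\<in>mons d. shift_coeff (\<lambda>x. - (a $ x)) b alpha * xi b)"
  unfolding shift_eval_def shift_coeff_def by simp

lemma shift_eval_scaled_delta:
  fixes a :: "real^'n::finite"
  assumes alpha: "alpha \<in> mons d"
  shows "shift_eval d (\<lambda>j. t * delta d a j) a alpha = (if alpha = (\<lambda>_. 0) then t else 0)"
proof -
  have "shift_eval d (\<lambda>j. t * delta d a j) a alpha
      = t * (\<Sum>b\<in>mons d. shift_coeff (\<lambda>x. - (a $ x)) b alpha * (\<Prod>x\<in>UNIV. (a $ x) ^ b x))"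
    unfolding shift_eval_eq sum_distrib_left
    by (intro sum.cong) (auto simp: delta_def monom_def mult_ac)
  also have "\<dots> = t * (\<Prod>x\<in>UNIV. (a $ x + - (a $ x)) ^ alpha x)"
    by (simp only: multi_binomial[OF alpha])
  also have "\<dots> = (if alpha = (\<lambda>_. 0) then t else 0)"
    by (auto simp: power_0_left fun_eq_iff)
  finally show ?thesis .
qed

lemma monom_add_scaled:
  fixes a0 y :: "real^'n::finite"
  assumes j: "j \<in> mons d"
  shows "monom (a0 + r *\<^sub>R y) j = (\<Sum>b\<in>mons d. shift_coeff (vec_nth a0) b j * (r ^ sum b UNIV * monom y b))"
proof -
  have "monom (a0 + r *\<^sub>R y) j = (\<Prod>x\<in>UNIV. (r * y $ x + a0 $ x) ^ j x)"
    unfolding monom_def by (simp add: add.commute)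
  also have "\<dots> = (\<Sum>b\<in>mons d. shift_coeff (vec_nth a0) b j * (\<Prod>x\<in>UNIV. (r * y $ x) ^ b x))"
    by (rule multi_binomial[OF j])
  also have "\<dots> = (\<Sum>b\<in>mons d. shift_coeff (vec_nth a0) b j * (r ^ sum b UNIV * monom y b))"
    by (simp add: monom_def power_mult_distrib prod.distrib power_sum)
  finally show ?thesis .
qed

lemma weighted_deltas_mem_DeltaE:
  fixes p :: "nat \<Rightarrow> real^'n::finite"
  assumes zero: "\<And>i. NN TYPE('n) d < i \<Longrightarrow> p i = 0"
    and inX: "\<And>i. i \<le> NN TYPE('n) d \<Longrightarrow> p i \<in> X"
    and bound: "\<And>i. i \<le> NN TYPE('n) d \<Longrightarrow> \<bar>lam i\<bar> * norm (p i - p 0) ^ d \<le> 1"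
  shows "(p, \<lambda>j. \<Sum>i\<le>NN TYPE('n) d. lam i * delta d (p i) j) \<in> DeltaE X d (E0 X d)"
  unfolding DeltaE_def
proof (clarify, intro conjI exI[of _ "\<lambda>i j. lam i * delta d (p i) j"])
  show "\<forall>i\<le>NN TYPE('n) d. p i \<in> X \<and> (\<lambda>j. lam i * delta d (p i) j) \<in> E0 X d (p i) \<and>
      (\<forall>alpha\<in>mons d. norm (p i - p 0) ^ (d - sum alpha UNIV) *
         \<bar>shift_eval d (\<lambda>j. lam i * delta d (p i) j) (p i) alpha\<bar> \<le> 1)"
    using inX bound by (auto simp: E0_def shift_eval_scaled_delta mult.commute)
qed (use zero in auto)

lemma tendsto_fun_iff:
  fixes f :: "'a \<Rightarrow> 'b \<Rightarrow> 'c::topological_space"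
  shows "(f \<longlongrightarrow> l) F \<longleftrightarrow> (\<forall>i. ((\<lambda>k. f k i) \<longlongrightarrow> l i) F)"
proof -
  have "(f \<longlongrightarrow> l) F \<longleftrightarrow> limitin (product_topology (\<lambda>i. euclidean) UNIV) f l F"
    by (simp add: euclidean_product_topology)
  also have "\<dots> \<longleftrightarrow> (\<forall>i. ((\<lambda>k. f k i) \<longlongrightarrow> l i) F)"
    by (subst limitin_componentwise) auto
  finally show ?thesis .
qed

lemma representation_mem_DeltaE:
  fixes p :: "nat \<Rightarrow> real^'n::finite" and eta :: "('n \<Rightarrow> nat) \<Rightarrow> real"
  assumes eta: "eta \<in> Pdual d"
    and zero: "\<And>i. NN TYPE('n) d < i \<Longrightarrow> p i = 0"
    and inX: "\<And>i. i \<le> NN TYPE('n) d \<Longrightarrow> p i \<in> X"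
    and rep: "\<And>j. j \<in> mons d \<Longrightarrow> (\<Sum>i\<le>NN TYPE('n) d. lam i * monom (p i) j) = eta j"
    and bound: "\<And>i. i \<le> NN TYPE('n) d \<Longrightarrow> \<bar>lam i\<bar> * norm (p i - p 0) ^ d \<le> 1"
  shows "(p, eta) \<in> DeltaE X d (E0 X d)"
proof -
  have "eta = (\<lambda>j. \<Sum>i\<le>NN TYPE('n) d. lam i * delta d (p i) j)"
  proof
    fix j
    show "eta j = (\<Sum>i\<le>NN TYPE('n) d. lam i * delta d (p i) j)"
      using rep eta by (cases "j \<in> mons d") (auto simp: delta_def Pdual_def)
  qed
  moreover have "(p, \<lambda>j. \<Sum>i\<le>NN TYPE('n) d. lam i * delta d (p i) j) \<in> DeltaE X d (E0 X d)"
    by (rule weighted_deltas_mem_DeltaE) (use zero inX bound in auto)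
  ultimately show ?thesis
    by simp
qed

lemma mem_paratangent_if_bounded_representations:
  fixes pts :: "nat \<Rightarrow> nat \<Rightarrow> real^'n::finite" and eta :: "('n \<Rightarrow> nat) \<Rightarrow> real"
  assumes "a \<in> X" and eta: "eta \<in> Pdual d"
    and inX: "\<And>k i. i \<le> NN TYPE('n) d \<Longrightarrow> pts k i \<in> X"
    and lim: "\<And>i. i \<le> NN TYPE('n) d \<Longrightarrow> (\<lambda>k. pts k i) \<longlonglongrightarrow> a"
    and rep: "\<exists>C. \<forall>\<^sub>F k in sequentially. \<exists>lam.
       (\<forall>j\<in>mons d. (\<Sum>i\<le>NN TYPE('n) d. lam i * monom (pts k i) j) = eta j) \<and>
       (\<forall>i\<le>NN TYPE('n) d. \<bar>lam i\<bar> * norm (pts k i - pts k 0) ^ d \<le> C)"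
  shows "eta \<in> paratangent X d a"
proof -
  define N where "N = NN TYPE('n) d"
  obtain C where rep: "\<forall>\<^sub>F k in sequentially. \<exists>lam.
       (\<forall>j\<in>mons d. (\<Sum>i\<le>N. lam i * monom (pts k i) j) = eta j) \<and>
       (\<forall>i\<le>N. \<bar>lam i\<bar> * norm (pts k i - pts k 0) ^ d \<le> C)"
    using rep unfolding N_def by blast
  define t where "t = 1 / (\<bar>C\<bar> + 1)"
  have t: "t > 0" "t * C \<le> 1"
    unfolding t_def by (auto simp: field_simps)
  define p where "p k i = (if i \<le> N then pts k i else 0)" for k i
  have p_zero: "N < i \<Longrightarrow> p k i = 0" and p_X: "i \<le> N \<Longrightarrow> p k i \<in> X" for k i
    using inX by (auto simp: p_def N_def)
  have "\<forall>\<^sub>F k in sequentially. (p k, \<lambda>j. t * eta j) \<in> DeltaE X d (E0 X d)"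
    using rep
  proof eventually_elim
    case (elim k)
    then obtain lam where lam_eta: "\<forall>j\<in>mons d. (\<Sum>i\<le>N. lam i * monom (pts k i) j) = eta j"
      and lam_bound: "\<forall>i\<le>N. \<bar>lam i\<bar> * norm (pts k i - pts k 0) ^ d \<le> C"
      by blast
    have "(\<Sum>i\<le>N. (t * lam i) * monom (p k i) j) = t * eta j" if "j \<in> mons d" for j
      using lam_eta that by (simp add: p_def mult.assoc sum_distrib_left[symmetric])
    moreover have "\<bar>t * lam i\<bar> * norm (p k i - p k 0) ^ d \<le> 1" if "i \<le> N" for i
    proof -
      have "\<bar>t * lam i\<bar> * norm (p k i - p k 0) ^ d = t * (\<bar>lam i\<bar> * norm (pts k i - pts k 0) ^ d)"
        using t that by (simp add: p_def abs_mult)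
      also have "\<dots> \<le> t * C"
        using lam_bound that t by (intro mult_left_mono) auto
      finally show ?thesis using t by simp
    qed
    ultimately show ?case
      using eta p_zero p_X unfolding N_def
      by (intro representation_mem_DeltaE[where lam = "\<lambda>i. t * lam i"]) (auto simp: Pdual_def)
  qed
  moreover have "p \<longlonglongrightarrow> diag d a"
    unfolding tendsto_fun_iff p_def diag_def N_def using lim by auto
  ultimately have "(diag d a, \<lambda>j. t * eta j) \<in> closure (DeltaE X d (E0 X d))"
    by (intro Lim_in_closed_set[OF closed_closure _ trivial_limit_sequentially tendsto_Pair])
       (auto elim: eventually_mono intro: closure_subset[THEN subsetD])
  then show ?thesis
    using \<open>a \<in> X\<close> t by (intro mem_paratangent_if_scaled_mem_Eprime[of t]) (auto simp: Eprime_def)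
qed

section \<open>Bounded solutions of linear systems\<close>

lemma abs_det_le:
  fixes A :: "real mat"
  assumes A: "A \<in> carrier_mat n n" and B: "\<And>i j. i < n \<Longrightarrow> j < n \<Longrightarrow> \<bar>A $$ (i, j)\<bar> \<le> B"
  shows "\<bar>det A\<bar> \<le> fact n * B ^ n"
proof -
  have "\<bar>det A\<bar> \<le> (\<Sum>p | p permutes {0..<n}. \<bar>signof p * (\<Prod>i = 0..<n. A $$ (i, p i))\<bar>)"
    unfolding det_def'[OF A] by (rule sum_abs)
  also have "\<dots> \<le> (\<Sum>p | p permutes {0..<n}. B ^ n)"
  proof (rule sum_mono)
    fix p assume "p \<in> {p. p permutes {0..<n}}"
    then have p: "p permutes {0..<n}" by simp
    have "\<bar>signof p * (\<Prod>i = 0..<n. A $$ (i, p i))\<bar> = (\<Prod>i = 0..<n. \<bar>A $$ (i, p i)\<bar>)"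
      by (simp add: abs_mult abs_prod sign_def)
    also have "\<dots> \<le> (\<Prod>i = 0..<n. B)"
      using B permutes_in_image[OF p] by (intro prod_mono) auto
    finally show "\<bar>signof p * (\<Prod>i = 0..<n. A $$ (i, p i))\<bar> \<le> B ^ n" by simp
  qed
  also have "\<dots> = fact n * B ^ n"
    by (simp add: card_permutations)
  finally show ?thesis .
qed

lemma abs_adj_mat_le:
  fixes A :: "real mat"
  assumes A: "A \<in> carrier_mat n n" and B: "\<And>i j. i < n \<Longrightarrow> j < n \<Longrightarrow> \<bar>A $$ (i, j)\<bar> \<le> B"
    and "1 \<le> B" and "i < n" "j < n"
  shows "\<bar>adj_mat A $$ (i, j)\<bar> \<le> fact n * B ^ n"
proof -
  have "\<bar>adj_mat A $$ (i, j)\<bar> = \<bar>det (mat_delete A j i)\<bar>"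
    using assms by (simp add: adj_mat_def cofactor_def abs_mult)
  also have "\<dots> \<le> fact (n - 1) * B ^ (n - 1)"
    using A by (intro abs_det_le[OF mat_delete_carrier[OF A]]) (auto simp: mat_delete_def intro!: B)
  also have "\<dots> \<le> fact n * B ^ n"
    using \<open>1 \<le> B\<close> by (intro mult_mono fact_mono power_increasing) auto
  finally show ?thesis .
qed

lemma abs_mult_mat_vec_le:
  fixes A :: "real mat" and v :: "real Matrix.vec"
  assumes A: "A \<in> carrier_mat n n" and v: "v \<in> carrier_vec n"
    and B: "\<And>i j. i < n \<Longrightarrow> j < n \<Longrightarrow> \<bar>A $$ (i, j)\<bar> \<le> B"
    and V: "\<And>j. j < n \<Longrightarrow> \<bar>v $ j\<bar> \<le> V" and i: "i < n"
  shows "\<bar>(A *\<^sub>v v) $ i\<bar> \<le> n * B * V"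
proof -
  have "0 \<le> B" using B[OF i i] by linarith
  have "\<bar>(A *\<^sub>v v) $ i\<bar> = \<bar>\<Sum>j = 0..<n. A $$ (i, j) * v $ j\<bar>"
    using A v i by (simp add: scalar_prod_def)
  also have "\<dots> \<le> (\<Sum>j = 0..<n. \<bar>A $$ (i, j)\<bar> * \<bar>v $ j\<bar>)"
    by (simp add: abs_mult[symmetric] sum_abs)
  also have "\<dots> \<le> (\<Sum>j = 0..<n. B * V)"
    using B V i \<open>0 \<le> B\<close> by (intro sum_mono mult_mono) auto
  finally show ?thesis by simp
qed

lemma bounded_solution:
  fixes A :: "real mat" and v :: "real Matrix.vec"
  assumes A: "A \<in> carrier_mat n n" and c: "0 < c" "c \<le> \<bar>det A\<bar>"
    and B: "\<And>i j. i < n \<Longrightarrow> j < n \<Longrightarrow> \<bar>A $$ (i, j)\<bar> \<le> B" "1 \<le> B"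
    and v: "v \<in> carrier_vec n" "\<And>j. j < n \<Longrightarrow> \<bar>v $ j\<bar> \<le> V"
  obtains x where "x \<in> carrier_vec n" "A *\<^sub>v x = v"
    "\<And>i. i < n \<Longrightarrow> \<bar>x $ i\<bar> \<le> real n * fact n * B ^ n * V / c"
proof
  let ?z = "adj_mat A *\<^sub>v v"
  have adj: "adj_mat A \<in> carrier_mat n n" and z: "?z \<in> carrier_vec n"
    using adj_mat(1)[OF A] v by auto
  have "det A \<noteq> 0" using c by auto
  show "(1 / det A) \<cdot>\<^sub>v ?z \<in> carrier_vec n" using z by simp
  have "A *\<^sub>v ((1 / det A) \<cdot>\<^sub>v ?z) = (1 / det A) \<cdot>\<^sub>v ((A * adj_mat A) *\<^sub>v v)"
    using A adj v by (simp add: mult_mat_vec[OF A z])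
  also have "\<dots> = (1 / det A) \<cdot>\<^sub>v (det A \<cdot>\<^sub>v v)"
    using adj_mat(2)[OF A] v by auto
  finally show "A *\<^sub>v ((1 / det A) \<cdot>\<^sub>v ?z) = v"
    using \<open>det A \<noteq> 0\<close> by (simp add: smult_smult_assoc)
  fix i assume i: "i < n"
  have "\<bar>?z $ i\<bar> \<le> real n * (fact n * B ^ n) * V"
    using abs_adj_mat_le[OF A B] by (intro abs_mult_mat_vec_le[OF adj v(1) _ v(2) i])
  then have z_le: "\<bar>?z $ i\<bar> \<le> real n * fact n * B ^ n * V"
    by (simp only: mult.assoc)
  have "((1 / det A) \<cdot>\<^sub>v ?z) $ i = ?z $ i / det A"
    using index_smult_vec(1)[of i ?z "1 / det A"] i carrier_vecD[OF z] by simp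
  then have "\<bar>((1 / det A) \<cdot>\<^sub>v ?z) $ i\<bar> = \<bar>?z $ i\<bar> / \<bar>det A\<bar>"
    by (simp add: abs_divide)
  also have "\<dots> \<le> \<bar>?z $ i\<bar> / c"
    using c by (intro divide_left_mono) auto
  also have "\<dots> \<le> real n * fact n * B ^ n * V / c"
    using z_le c by (intro divide_right_mono) auto
  finally show "\<bar>((1 / det A) \<cdot>\<^sub>v ?z) $ i\<bar> \<le> real n * fact n * B ^ n * V / c" .
qed

lemma det_eq_prod_diag:
  fixes A :: "'a::comm_ring_1 mat"
  assumes A: "A \<in> carrier_mat n n"
    and off_diag: "\<And>p. p permutes {0..<n} \<Longrightarrow> p \<noteq> id \<Longrightarrow> (\<Prod>i = 0..<n. A $$ (i, p i)) = 0"
  shows "det A = (\<Prod>i = 0..<n. A $$ (i, i))"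
proof -
  have "det A = signof id * (\<Prod>i = 0..<n. A $$ (i, id i)) +
      (\<Sum>p \<in> {p. p permutes {0..<n}} - {id}. signof p * (\<Prod>i = 0..<n. A $$ (i, p i)))"
    unfolding det_def'[OF A] by (subst sum.remove[of _ id]) (auto simp: finite_permutations permutes_id)
  also have "(\<Sum>p \<in> {p. p permutes {0..<n}} - {id}. signof p * (\<Prod>i = 0..<n. A $$ (i, p i))) = 0"
    using off_diag by (intro sum.neutral) auto
  finally show ?thesis by (simp add: sign_id)
qed

lemma det_mat_diag: "det (mat_diag n f) = (\<Prod>i = 0..<n. f i :: 'a::comm_ring_1)"
proof -
  have "det (mat_diag n f) = (\<Prod>i = 0..<n. mat_diag n f $$ (i, i))"
  proof (rule det_eq_prod_diag[OF mat_diag_dim])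
    fix p assume p: "p permutes {0..<n}" "p \<noteq> id"
    then obtain l where l: "p l \<noteq> l" by (auto simp: fun_eq_iff)
    have "l \<in> {0..<n}"
      using p l by (meson permutes_not_in)
    moreover have "p l \<in> {0..<n}"
      using p calculation by (simp add: permutes_in_image)
    ultimately show "(\<Prod>i = 0..<n. mat_diag n f $$ (i, p i)) = 0"
      using l by (intro prod_zero bexI[of _ l]) (auto simp: mat_diag_def)
  qed
  then show ?thesis by (simp add: mat_diag_def)
qed

lemma mat_diag_mult_vec:
  assumes "v \<in> carrier_vec n"
  shows "mat_diag n f *\<^sub>v v = vec n (\<lambda>i. f i * v $ i)"
proof (rule eq_vecI)
  fix i assume "i < dim_vec (vec n (\<lambda>i. f i * v $ i))"
  then have i: "i < n" by simp
  have "(mat_diag n f *\<^sub>v v) $ i = (\<Sum>k = 0..<n. (if i = k then f k else 0) * v $ k)"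
    using i assms by (simp add: mat_diag_def scalar_prod_def)
  also have "\<dots> = (\<Sum>k = 0..<n. if i = k then f k * v $ k else 0)"
    by (rule sum.cong) auto
  also have "\<dots> = f i * v $ i"
    using i by simp
  finally show "(mat_diag n f *\<^sub>v v) $ i = vec n (\<lambda>i. f i * v $ i) $ i"
    using i by simp
qed (use assms in \<open>auto simp: mat_diag_def\<close>)

lemma mat_diag_mult_vec_divide:
  fixes f :: "nat \<Rightarrow> 'a::field"
  assumes "v \<in> carrier_vec n" and "\<And>i. i < n \<Longrightarrow> f i \<noteq> 0"
  shows "mat_diag n f *\<^sub>v vec n (\<lambda>i. v $ i / f i) = v"
  using assms by (intro eq_vecI) (auto simp: mat_diag_mult_vec)

section \<open>Factorization of the Vandermonde matrix\<close>

text \<open>The transpose of \<open>V(A)\<close>: rows are indexed by the monomials \<open>e l\<close>, so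
  \<open>vandermonde_mat n e pts *\<^sub>v lam = eta\<close> says that \<open>eta\<close> agrees with \<open>\<Sum>i. lam i \<delta>(pts i)\<close>
  on the monomials.\<close>

definition vandermonde_mat ::
  "nat \<Rightarrow> (nat \<Rightarrow> ('n::finite \<Rightarrow> nat)) \<Rightarrow> (nat \<Rightarrow> real^'n) \<Rightarrow> real mat" where
  "vandermonde_mat n e pts = mat n n (\<lambda>(l, i). monom (pts i) (e l))"

definition shift_mat :: "nat \<Rightarrow> (nat \<Rightarrow> ('n::finite \<Rightarrow> nat)) \<Rightarrow> real^'n \<Rightarrow> real mat" where
  "shift_mat n e a0 = mat n n (\<lambda>(l, m). shift_coeff (vec_nth a0) (e m) (e l))"

lemma vandermonde_mat_carrier [simp]: "vandermonde_mat n e pts \<in> carrier_mat n n"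
  by (simp add: vandermonde_mat_def)

lemma shift_mat_carrier [simp]: "shift_mat n e a0 \<in> carrier_mat n n"
  by (simp add: shift_mat_def)

lemma vandermonde_mat_factorization:
  assumes e: "bij_betw e {0..<n} (mons d)"
  shows "vandermonde_mat n e (\<lambda>i. a + r *\<^sub>R y i) =
    shift_mat n e a * (mat_diag n (\<lambda>m. r ^ sum (e m) UNIV) * vandermonde_mat n e y)"
proof (rule eq_matI)
  fix l i assume "l < dim_row (shift_mat n e a * (mat_diag n (\<lambda>m. r ^ sum (e m) UNIV) * vandermonde_mat n e y))"
    "i < dim_col (shift_mat n e a * (mat_diag n (\<lambda>m. r ^ sum (e m) UNIV) * vandermonde_mat n e y))"
  then have li: "l < n" "i < n" by (simp_all add: shift_mat_def vandermonde_mat_def)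
  have "(shift_mat n e a * (mat_diag n (\<lambda>m. r ^ sum (e m) UNIV) * vandermonde_mat n e y)) $$ (l, i)
      = (\<Sum>m = 0..<n. shift_coeff (vec_nth a) (e m) (e l) * (r ^ sum (e m) UNIV * monom (y i) (e m)))"
    using li by (simp add: mat_diag_mult_left[of _ n n] shift_mat_def vandermonde_mat_def scalar_prod_def)
  also have "\<dots> = (\<Sum>b\<in>mons d. shift_coeff (vec_nth a) b (e l) * (r ^ sum b UNIV * monom (y i) b))"
    by (rule sum.reindex_bij_betw[OF e])
  also have "\<dots> = monom (a + r *\<^sub>R y i) (e l)"
    using e li by (intro monom_add_scaled[symmetric]) (auto dest: bij_betwE)
  finally show "vandermonde_mat n e (\<lambda>i. a + r *\<^sub>R y i) $$ (l, i) =
      (shift_mat n e a * (mat_diag n (\<lambda>m. r ^ sum (e m) UNIV) * vandermonde_mat n e y)) $$ (l, i)"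
    using li by (simp add: vandermonde_mat_def)
qed (auto simp: shift_mat_def vandermonde_mat_def)

lemma permutes_id_if_pointwise_le:
  fixes e :: "'a \<Rightarrow> 'b::finite \<Rightarrow> nat"
  assumes p: "p permutes S" and S: "finite S" and inj: "inj_on e S"
    and le: "\<And>l. l \<in> S \<Longrightarrow> \<forall>x. e (p l) x \<le> e l x"
  shows "p = id"
proof
  fix l
  show "p l = id l"
  proof (cases "l \<in> S")
    case True
    have eq: "(\<Sum>l\<in>S. sum (e (p l)) UNIV) = (\<Sum>l\<in>S. sum (e l) UNIV)"
      using sum.permute[OF p, of "\<lambda>l. sum (e l) UNIV"] by (simp add: comp_def)
    have "sum (e (p l)) UNIV = sum (e l) UNIV"
      using sum_mono_inv[OF eq _ True S] le by (simp add: sum_mono)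
    then have "e (p l) x = e l x" for x
      using sum_mono_inv[of "e (p l)" UNIV "e l" x] le[OF True] by simp
    moreover have "p l \<in> S" using p True by (simp add: permutes_in_image)
    ultimately show ?thesis using inj True by (auto dest: inj_onD)
  next
    case False
    then show ?thesis using p by (simp add: permutes_not_in)
  qed
qed

text \<open>The shift matrix is unitriangular for the componentwise order of multi-indices.\<close>

lemma det_shift_mat:
  assumes e: "inj_on e {0..<n}"
  shows "det (shift_mat n e a0) = 1"
proof -
  have "det (shift_mat n e a0) = (\<Prod>i = 0..<n. shift_mat n e a0 $$ (i, i))"
  proof (rule det_eq_prod_diag[OF shift_mat_carrier])
    fix p assume p: "p permutes {0..<n}" "p \<noteq> id"
    show "(\<Prod>i = 0..<n. shift_mat n e a0 $$ (i, p i)) = 0"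
    proof (rule ccontr)
      assume nz: "(\<Prod>i = 0..<n. shift_mat n e a0 $$ (i, p i)) \<noteq> 0"
      have "\<forall>x. e (p l) x \<le> e l x" if l: "l \<in> {0..<n}" for l
      proof -
        have "shift_mat n e a0 $$ (l, p l) \<noteq> 0"
          using nz l by auto
        moreover have "p l \<in> {0..<n}"
          using p(1) l by (simp add: permutes_in_image)
        ultimately have "shift_coeff (vec_nth a0) (e (p l)) (e l) \<noteq> 0"
          using l by (simp add: shift_mat_def)
        then show ?thesis
          by (auto simp: shift_coeff_def split: if_splits)
      qed
      then show False
        using permutes_id_if_pointwise_le[OF p(1) _ e] p(2) by auto
    qed
  qed
  then show ?thesis
    by (simp add: shift_mat_def shift_coeff_def)
qed

lemma det_vandermonde_mat_rescaled:
  fixes e :: "nat \<Rightarrow> ('n::finite \<Rightarrow> nat)"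
  assumes e: "bij_betw e {0..<n} (mons d)"
  shows "det (vandermonde_mat n e (\<lambda>i. a + r *\<^sub>R y i)) =
    r ^ (\<Sum>b\<in>(mons d :: ('n \<Rightarrow> nat) set). sum b UNIV) * det (vandermonde_mat n e y)"
proof -
  have "(\<Prod>m = 0..<n. r ^ sum (e m) UNIV) = (\<Prod>b\<in>(mons d :: ('n \<Rightarrow> nat) set). r ^ sum b UNIV)"
    using prod.reindex_bij_betw[OF e, of "\<lambda>b. r ^ sum b UNIV"] by simp
  also have "\<dots> = r ^ (\<Sum>b\<in>(mons d :: ('n \<Rightarrow> nat) set). sum b UNIV)"
    by (rule power_sum[symmetric])
  finally have "(\<Prod>m = 0..<n. r ^ sum (e m) UNIV) = r ^ (\<Sum>b\<in>(mons d :: ('n \<Rightarrow> nat) set). sum b UNIV)" .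
  moreover have "det (shift_mat n e a) = 1"
    by (rule det_shift_mat[OF bij_betw_imp_inj_on[OF e]])
  moreover have "det (vandermonde_mat n e (\<lambda>i. a + r *\<^sub>R y i)) = det (shift_mat n e a) *
      (det (mat_diag n (\<lambda>m. r ^ sum (e m) UNIV)) * det (vandermonde_mat n e y))"
    unfolding vandermonde_mat_factorization[OF e]
    by (simp add: det_mult[OF shift_mat_carrier mult_carrier_mat[OF mat_diag_dim vandermonde_mat_carrier]]
        det_mult[OF mat_diag_dim vandermonde_mat_carrier])
  ultimately show ?thesis
    by (simp add: det_mat_diag)
qed

lemma abs_shift_coeff_le:
  fixes a0 :: "real^'n::finite"
  assumes B: "norm a0 \<le> B" "1 \<le> B" and j: "j \<in> mons d"
  shows "\<bar>shift_coeff (vec_nth a0) b j\<bar> \<le> (2 ^ d * B ^ d) ^ CARD('n)"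
proof (cases "\<forall>x. b x \<le> j x")
  case True
  have "\<bar>shift_coeff (vec_nth a0) b j\<bar> = (\<Prod>x\<in>UNIV. of_nat (j x choose b x) * \<bar>a0 $ x\<bar> ^ (j x - b x))"
    using True by (simp add: shift_coeff_def abs_prod abs_mult power_abs)
  also have "\<dots> \<le> (\<Prod>x\<in>(UNIV::'n set). 2 ^ d * B ^ d)"
  proof (rule prod_mono, rule conjI)
    fix x
    have "j x \<le> sum j UNIV"
      by (rule member_le_sum) auto
    then have jx: "j x \<le> d"
      using j by (simp add: mons_def)
    have "real (j x choose b x) \<le> 2 ^ j x"
      using binomial_le_pow2[of "j x" "b x"] by (metis of_nat_le_iff of_nat_numeral of_nat_power)
    also have "(2::real) ^ j x \<le> 2 ^ d"
      using jx by (intro power_increasing) auto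
    finally have binomial: "real (j x choose b x) \<le> 2 ^ d" .
    have "\<bar>a0 $ x\<bar> ^ (j x - b x) \<le> B ^ (j x - b x)"
      using component_le_norm_cart[of a0 x] B by (intro power_mono) auto
    also have "\<dots> \<le> B ^ d"
      using B jx by (intro power_increasing) auto
    finally have power: "\<bar>a0 $ x\<bar> ^ (j x - b x) \<le> B ^ d" .
    show "real (j x choose b x) * \<bar>a0 $ x\<bar> ^ (j x - b x) \<le> 2 ^ d * B ^ d"
      using binomial power by (intro mult_mono) auto
    show "0 \<le> real (j x choose b x) * \<bar>a0 $ x\<bar> ^ (j x - b x)"
      by simp
  qed
  also have "\<dots> = (2 ^ d * B ^ d) ^ CARD('n)"
    by simp
  finally show ?thesis .
next
  case False
  then have "shift_coeff (vec_nth a0) b j = 0"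
    by (auto simp: shift_coeff_def)
  moreover have "0 \<le> (2 ^ d * B ^ d) ^ CARD('n)"
    using B by (intro zero_le_power mult_nonneg_nonneg) auto
  ultimately show ?thesis
    by simp
qed

lemma abs_monom_le_1:
  fixes y :: "real^'n::finite"
  assumes "norm y \<le> 1"
  shows "\<bar>monom y b\<bar> \<le> 1"
proof -
  have "\<bar>y $ x\<bar> \<le> 1" for x
    using component_le_norm_cart[of y x] assms by linarith
  then have "(\<Prod>x\<in>UNIV. \<bar>y $ x\<bar> ^ b x) \<le> 1"
    by (intro prod_le_1) (auto intro: power_le_one)
  then show ?thesis
    by (simp add: monom_def abs_prod power_abs)
qed

lemma abs_det_vandermonde_mat_rescaled_ge:
  fixes e :: "nat \<Rightarrow> ('n::finite \<Rightarrow> nat)" and pts :: "nat \<Rightarrow> real^'n"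
  assumes e: "bij_betw e {0..<n} (mons d)" and r: "0 < r"
    and c: "c * r ^ (\<Sum>b\<in>(mons d :: ('n \<Rightarrow> nat) set). sum b UNIV) \<le> \<bar>det (vandermonde_mat n e pts)\<bar>"
  shows "c \<le> \<bar>det (vandermonde_mat n e (\<lambda>i. (1 / r) *\<^sub>R (pts i - pts 0)))\<bar>"
proof -
  let ?S = "\<Sum>b\<in>(mons d :: ('n \<Rightarrow> nat) set). sum b UNIV"
    and ?W = "vandermonde_mat n e (\<lambda>i. (1 / r) *\<^sub>R (pts i - pts 0))"
  have "(\<lambda>i. pts 0 + r *\<^sub>R ((1 / r) *\<^sub>R (pts i - pts 0))) = pts"
    using r by (simp add: fun_eq_iff)
  then have "det (vandermonde_mat n e pts) = r ^ ?S * det ?W"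
    using det_vandermonde_mat_rescaled[OF e, where a = "pts 0" and r = r
        and y = "\<lambda>i. (1 / r) *\<^sub>R (pts i - pts 0)"]
    by simp
  then have "r ^ ?S * c \<le> r ^ ?S * \<bar>det ?W\<bar>"
    using c r by (simp add: abs_mult mult.commute)
  then show ?thesis
    using r by (simp add: mult_le_cancel_left_pos)
qed

lemma bounded_vandermonde_solution:
  fixes pts :: "nat \<Rightarrow> real^'n::finite" and e :: "nat \<Rightarrow> ('n \<Rightarrow> nat)" and v :: "real Matrix.vec"
  assumes e: "bij_betw e {0..<n} (mons d)"
    and r: "0 < r" "r \<le> 1" and near: "\<And>i. i < n \<Longrightarrow> norm (pts i - pts 0) \<le> r"
    and c: "0 < c" "c * r ^ (\<Sum>b\<in>(mons d :: ('n \<Rightarrow> nat) set). sum b UNIV) \<le> \<bar>det (vandermonde_mat n e pts)\<bar>"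
    and K: "\<And>b j. b \<in> mons d \<Longrightarrow> j \<in> mons d \<Longrightarrow> \<bar>shift_coeff (vec_nth (pts 0)) b j\<bar> \<le> K" "1 \<le> K"
    and v: "v \<in> carrier_vec n" "\<And>l. l < n \<Longrightarrow> \<bar>v $ l\<bar> \<le> V"
  obtains lam where "lam \<in> carrier_vec n" "vandermonde_mat n e pts *\<^sub>v lam = v"
    "\<And>i. i < n \<Longrightarrow> \<bar>lam $ i\<bar> * r ^ d \<le> real n * fact n * (real n * fact n * K ^ n * V) / c"
proof -
  define y where "y i = (1 / r) *\<^sub>R (pts i - pts 0)" for i
  define U where "U = real n * fact n * K ^ n * V"
  let ?T = "shift_mat n e (pts 0)" and ?D = "mat_diag n (\<lambda>m. r ^ sum (e m) UNIV)"
    and ?W = "vandermonde_mat n e y"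
  have em: "e m \<in> mons d" if "m < n" for m
    using e that by (auto dest: bij_betwE)
  have pts: "vandermonde_mat n e pts = vandermonde_mat n e (\<lambda>i. pts 0 + r *\<^sub>R y i)"
    using r by (simp add: y_def)
  have detW: "c \<le> \<bar>det ?W\<bar>"
    unfolding y_def by (rule abs_det_vandermonde_mat_rescaled_ge[OF e r(1) c(2)])
  have W_le: "\<bar>?W $$ (m, i)\<bar> \<le> 1" if "m < n" "i < n" for m i
    using that near[OF that(2)] r by (simp add: vandermonde_mat_def y_def abs_monom_le_1)
  have T_le: "\<bar>?T $$ (l, m)\<bar> \<le> K" if "l < n" "m < n" for l m
    using that K(1)[OF em em] by (simp add: shift_mat_def)
  have detT: "1 \<le> \<bar>det ?T\<bar>"
    using det_shift_mat[OF bij_betw_imp_inj_on[OF e]] by simp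
  obtain u where u: "u \<in> carrier_vec n" "?T *\<^sub>v u = v" "\<And>m. m < n \<Longrightarrow> \<bar>u $ m\<bar> \<le> U"
    using bounded_solution[OF shift_mat_carrier _ detT T_le K(2) v] unfolding U_def by auto
  define w where "w = vec n (\<lambda>m. u $ m / r ^ sum (e m) UNIV)"
  have Dw: "?D *\<^sub>v w = u"
    unfolding w_def using u(1) r by (intro mat_diag_mult_vec_divide) auto
  have w_le: "\<bar>w $ m\<bar> \<le> U / r ^ d" if "m < n" for m
  proof -
    have "\<bar>w $ m\<bar> = \<bar>u $ m\<bar> / r ^ sum (e m) UNIV"
      using that r by (simp add: w_def abs_divide)
    also have "\<dots> \<le> U / r ^ d"
    proof (rule frac_le)
      show "\<bar>u $ m\<bar> \<le> U" "0 \<le> U"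
        using u(3)[OF that] by auto
      show "r ^ d \<le> r ^ sum (e m) UNIV"
        using em[OF that] r by (intro power_decreasing) (auto simp: mons_def)
    qed (use r in auto)
    finally show ?thesis .
  qed
  obtain lam where lam: "lam \<in> carrier_vec n" "?W *\<^sub>v lam = w"
    "\<And>i. i < n \<Longrightarrow> \<bar>lam $ i\<bar> \<le> real n * fact n * (U / r ^ d) / c"
    using bounded_solution[OF vandermonde_mat_carrier c(1) detW W_le order_refl _ w_le]
    by (auto simp: w_def)
  have "vandermonde_mat n e pts *\<^sub>v lam = ?T *\<^sub>v (?D *\<^sub>v (?W *\<^sub>v lam))"
    unfolding pts vandermonde_mat_factorization[OF e] using lam(1)
    by (simp add: assoc_mult_mat_vec[of _ n n _ n] mult_carrier_mat[of _ n n _ n])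
  also have "\<dots> = v"
    using lam(2) Dw u(2) by simp
  finally have "vandermonde_mat n e pts *\<^sub>v lam = v" .
  show ?thesis
  proof (rule that[OF lam(1)])
    show "vandermonde_mat n e pts *\<^sub>v lam = v" by fact
    fix i assume "i < n"
    then have "\<bar>lam $ i\<bar> * r ^ d \<le> real n * fact n * (U / r ^ d) / c * r ^ d"
      using lam(3) r by (intro mult_right_mono) auto
    also have "\<dots> = real n * fact n * U / c"
      using r by simp
    finally show "\<bar>lam $ i\<bar> * r ^ d \<le> real n * fact n * (real n * fact n * K ^ n * V) / c"
      unfolding U_def .
  qed
qed

section \<open>Bounded coefficients and the main theorem\<close>

lemma ldet_eq_det: "ldet N M = det (mat (Suc N) (Suc N) (\<lambda>(i, j). M i j))"
proof -
  have "det (mat (Suc N) (Suc N) (\<lambda>(i, j). M i j)) =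
      (\<Sum>p | p permutes {..N}. signof p * (\<Prod>i\<le>N. mat (Suc N) (Suc N) (\<lambda>(i, j). M i j) $$ (i, p i)))"
    by (simp add: det_def'[of _ "Suc N"] atLeast0LessThan lessThan_Suc_atMost)
  also have "\<dots> = ldet N M"
    unfolding ldet_def
  proof (intro sum.cong refl arg_cong2[where f = times] prod.cong)
    fix p i assume "p \<in> {p. p permutes {..N}}" "i \<in> {..N}"
    then have "p i \<le> N" using permutes_in_image[of p "{..N}" i] by auto
    then show "mat (Suc N) (Suc N) (\<lambda>(i, j). M i j) $$ (i, p i) = M i (p i)"
      using \<open>i \<in> {..N}\<close> by simp
  qed
  finally show ?thesis ..
qed

lemma
  fixes d :: nat and pts :: "nat \<Rightarrow> real^'n::finite"
  defines "e \<equiv> SOME e. bij_betw e {..NN TYPE('n) d} (mons d :: ('n \<Rightarrow> nat) set)"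
  shows bij_betw_vdet_enumeration: "bij_betw e {0..<Suc (NN TYPE('n) d)} (mons d)"
    and abs_vdet_eq_abs_det: "abs_vdet d pts = \<bar>det (vandermonde_mat (Suc (NN TYPE('n) d)) e pts)\<bar>"
proof -
  let ?N = "NN TYPE('n) d"
  have ex: "\<exists>e. bij_betw e {..?N} (mons d :: ('n \<Rightarrow> nat) set)"
    using ex_bij_betw_nat_finite[OF finite_mons, of d]
    by (simp add: card_mons_eq_Suc_NN atLeast0LessThan lessThan_Suc_atMost)
  show "bij_betw e {0..<Suc ?N} (mons d)"
    using someI_ex[OF ex] unfolding e_def by (simp add: atLeast0LessThan lessThan_Suc_atMost)
  have "mat (Suc ?N) (Suc ?N) (\<lambda>(i, l). monom (pts i) (e l)) = transpose_mat (vandermonde_mat (Suc ?N) e pts)"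
    by (rule eq_matI) (auto simp: vandermonde_mat_def)
  then show "abs_vdet d pts = \<bar>det (vandermonde_mat (Suc ?N) e pts)\<bar>"
    unfolding abs_vdet_def Let_def e_def[symmetric] ldet_eq_det
    by (simp add: det_transpose[OF vandermonde_mat_carrier])
qed

lemma vandermonde_coefficients_bound:
  fixes pts :: "nat \<Rightarrow> real^'n::finite" and eta :: "('n \<Rightarrow> nat) \<Rightarrow> real"
  assumes r: "0 < r" "r \<le> 1" and near: "\<And>i. i \<le> NN TYPE('n) d \<Longrightarrow> norm (pts i - pts 0) \<le> r"
    and c: "0 < c" "c * r ^ (CARD('n) * Nd (CARD('n) + 1) (int d - 1)) \<le> abs_vdet d pts"
    and K: "\<And>b j. b \<in> mons d \<Longrightarrow> j \<in> mons d \<Longrightarrow> \<bar>shift_coeff (vec_nth (pts 0)) b j\<bar> \<le> K" "1 \<le> K"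
    and V: "\<And>j. j \<in> mons d \<Longrightarrow> \<bar>eta j\<bar> \<le> V"
  defines "n \<equiv> Suc (NN TYPE('n) d)"
  shows "\<exists>lam. (\<forall>j\<in>mons d. (\<Sum>i\<le>NN TYPE('n) d. lam i * monom (pts i) j) = eta j) \<and>
    (\<forall>i\<le>NN TYPE('n) d. \<bar>lam i\<bar> * r ^ d \<le> real n * fact n * (real n * fact n * K ^ n * V) / c)"
proof -
  define e where "e = (SOME e. bij_betw e {..NN TYPE('n) d} (mons d :: ('n \<Rightarrow> nat) set))"
  have e: "bij_betw e {0..<n} (mons d)"
    unfolding n_def e_def by (rule bij_betw_vdet_enumeration)
  let ?v = "vec n (\<lambda>l. eta (e l))"
  have v: "\<bar>?v $ l\<bar> \<le> V" if "l < n" for l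
    using that e V by (auto dest: bij_betwE)
  have det: "c * r ^ (\<Sum>b\<in>(mons d :: ('n \<Rightarrow> nat) set). sum b UNIV) \<le> \<bar>det (vandermonde_mat n e pts)\<bar>"
    using c(2) unfolding sum_degree_mons n_def e_def abs_vdet_eq_abs_det .
  have near': "norm (pts i - pts 0) \<le> r" if "i < n" for i
    using near that by (simp add: n_def)
  obtain lam where lam: "lam \<in> carrier_vec n" "vandermonde_mat n e pts *\<^sub>v lam = ?v"
    "\<And>i. i < n \<Longrightarrow> \<bar>lam $ i\<bar> * r ^ d \<le> real n * fact n * (real n * fact n * K ^ n * V) / c"
    by (rule bounded_vandermonde_solution[OF e r near' c(1) det K vec_carrier v]) blast+
  show ?thesis
  proof (intro exI[of _ "\<lambda>i. lam $ i"] conjI ballI allI impI)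
    fix j :: "'n \<Rightarrow> nat" assume "j \<in> mons d"
    then have "j \<in> e ` {0..<n}"
      using e by (simp add: bij_betw_def)
    then obtain l where l: "l < n" "e l = j"
      by auto
    have "(\<Sum>i\<le>NN TYPE('n) d. lam $ i * monom (pts i) j) = (\<Sum>i = 0..<n. monom (pts i) (e l) * lam $ i)"
      unfolding n_def atLeast0LessThan lessThan_Suc_atMost l(2) by (simp add: mult.commute)
    also have "\<dots> = (vandermonde_mat n e pts *\<^sub>v lam) $ l"
      using lam(1) l by (simp add: vandermonde_mat_def scalar_prod_def)
    also have "\<dots> = eta j"
      using lam(2) l by simp
    finally show "(\<Sum>i\<le>NN TYPE('n) d. lam $ i * monom (pts i) j) = eta j" .
  next
    fix i assume "i \<le> NN TYPE('n) d"
    then show "\<bar>lam $ i\<bar> * r ^ d \<le> real n * fact n * (real n * fact n * K ^ n * V) / c"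
      using lam(3) by (simp add: n_def)
  qed
qed

lemma eventually_bounded_vandermonde_coefficients:
  fixes pts :: "'k \<Rightarrow> nat \<Rightarrow> real^'n::finite" and r :: "'k \<Rightarrow> real"
    and eta :: "('n \<Rightarrow> nat) \<Rightarrow> real"
  assumes c: "0 < c" and r: "\<And>k. 0 < r k" and B: "\<And>k. norm (pts k 0) \<le> B"
    and near: "\<And>k i. i \<le> NN TYPE('n) d \<Longrightarrow> norm (pts k i - pts k 0) \<le> r k"
    and vdet: "\<And>k. c * r k ^ (CARD('n) * Nd (CARD('n) + 1) (int d - 1)) \<le> abs_vdet d (pts k)"
    and small: "\<forall>\<^sub>F k in F. r k \<le> 1"
  shows "\<exists>C. \<forall>\<^sub>F k in F. \<exists>lam.
    (\<forall>j\<in>mons d. (\<Sum>i\<le>NN TYPE('n) d. lam i * monom (pts k i) j) = eta j) \<and>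
    (\<forall>i\<le>NN TYPE('n) d. \<bar>lam i\<bar> * norm (pts k i - pts k 0) ^ d \<le> C)"
proof -
  define n where "n = Suc (NN TYPE('n) d)"
  define K where "K = (2 ^ d * max 1 B ^ d) ^ CARD('n)"
  define V where "V = (\<Sum>j\<in>mons d. \<bar>eta j\<bar>)"
  have "1 \<le> 2 ^ d * max 1 B ^ d"
    using mult_mono[OF one_le_power[of 2 d] one_le_power[OF max.cobounded1[of 1 B], of d]] by simp
  then have K: "1 \<le> K"
    unfolding K_def by (rule one_le_power)
  have V: "\<bar>eta j\<bar> \<le> V" if "j \<in> mons d" for j
    unfolding V_def using that finite_mons by (intro member_le_sum) auto
  have "\<forall>\<^sub>F k in F. \<exists>lam.
    (\<forall>j\<in>mons d. (\<Sum>i\<le>NN TYPE('n) d. lam i * monom (pts k i) j) = eta j) \<and>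
    (\<forall>i\<le>NN TYPE('n) d. \<bar>lam i\<bar> * norm (pts k i - pts k 0) ^ d \<le>
       real n * fact n * (real n * fact n * K ^ n * V) / c)"
    using small
  proof eventually_elim
    case (elim k)
    have B_k: "norm (pts k 0) \<le> max 1 B"
      using B[of k] by linarith
    have K_k: "\<bar>shift_coeff (vec_nth (pts k 0)) b j\<bar> \<le> K" if "b \<in> mons d" "j \<in> mons d" for b j
      unfolding K_def by (rule abs_shift_coeff_le[OF B_k max.cobounded1 that(2)])
    obtain lam where lam: "\<forall>j\<in>mons d. (\<Sum>i\<le>NN TYPE('n) d. lam i * monom (pts k i) j) = eta j"
      and bound: "\<forall>i\<le>NN TYPE('n) d. \<bar>lam i\<bar> * r k ^ d \<le> real n * fact n * (real n * fact n * K ^ n * V) / c"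
      using vandermonde_coefficients_bound[where pts = "pts k" and eta = eta, OF r[of k] elim near c vdet K_k K V]
      unfolding n_def by blast
    have "\<bar>lam i\<bar> * norm (pts k i - pts k 0) ^ d \<le> real n * fact n * (real n * fact n * K ^ n * V) / c"
      if "i \<le> NN TYPE('n) d" for i
    proof -
      have "\<bar>lam i\<bar> * norm (pts k i - pts k 0) ^ d \<le> \<bar>lam i\<bar> * r k ^ d"
        using near[OF that] by (intro mult_left_mono power_mono) auto
      also have "\<dots> \<le> real n * fact n * (real n * fact n * K ^ n * V) / c"
        using bound that by blast
      finally show ?thesis .
    qed
    then show ?case
      using lam by blast
  qed
  then show ?thesis by blast
qed

theorem theorem4p1:
  fixes d :: nat
    and r :: "nat \<Rightarrow> real"
    and a :: "nat \<Rightarrow> nat \<Rightarrow> real^'n::finite"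
    and xi0 :: "real^'n"
    and c :: real
    and X :: "(real^'n) set"
  assumes rpos: "\<And>k. r k > 0"
    and distinct: "\<And>k. inj_on (a k) {..NN TYPE('n) d}"
    and ball: "\<And>k i. i \<le> NN TYPE('n) d \<Longrightarrow> a k i \<in> cball (a k 0) (r k)"
    and lim_a: "(\<lambda>k. a k 0) \<longlonglongrightarrow> xi0"
    and lim_r: "r \<longlonglongrightarrow> 0"
    and cpos: "c > 0"
    and vdet: "\<And>k. abs_vdet d (a k) \<ge> c * r k ^ (CARD('n) * Nd (CARD('n) + 1) (int d - 1))"
    and closedX: "closed X"
    and inX: "\<And>k i. i \<le> NN TYPE('n) d \<Longrightarrow> a k i \<in> X"
  shows "paratangent X d xi0 = Pdual d"
proof (rule antisym[OF paratangent_subset_Pdual subsetI])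
  fix eta :: "('n \<Rightarrow> nat) \<Rightarrow> real" assume eta: "eta \<in> Pdual d"
  have xi0: "xi0 \<in> X"
    using closed_sequentially[OF closedX _ lim_a] inX[of 0] by auto
  have near: "norm (a k i - a k 0) \<le> r k" if "i \<le> NN TYPE('n) d" for k i
    using ball[OF that] by (simp add: dist_norm norm_minus_commute)
  have lim: "(\<lambda>k. a k i) \<longlonglongrightarrow> xi0" if "i \<le> NN TYPE('n) d" for i
  proof -
    have "(\<lambda>k. a k i - a k 0) \<longlonglongrightarrow> 0"
      by (rule Lim_null_comparison[OF _ lim_r]) (use near[OF that] in auto)
    from tendsto_add[OF lim_a this] show ?thesis by simp
  qed
  obtain B where B: "\<And>k. norm (a k 0) \<le> B"
    using BseqE[OF convergent_imp_Bseq[OF convergentI[OF lim_a]]] by metis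
  have "\<forall>\<^sub>F k in sequentially. r k \<le> 1"
    by (rule eventually_mono[OF order_tendstoD(2)[OF lim_r, of 1]]) auto
  from eventually_bounded_vandermonde_coefficients[where pts = a and eta = eta, OF cpos rpos B near vdet this]
  show "eta \<in> paratangent X d xi0"
    using inX lim by (intro mem_paratangent_if_bounded_representations[where pts = a, OF xi0 eta]) auto
qed

end
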